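(* Let $0\leq \beta<1$ and $m \in \mathbb{N}$. Let $f(z)=z+\sum_{k=1}^{\infty} a_{mk+1}z^{mk+1}$ belong to $\Theta_{\Sigma_m}(1,1,0,0;\beta)$ (the case $\tau=\lambda=1$, $\gamma=\delta=0$). Then $$|a_{m+1}| \leq \min\left\{\frac{2(1-\beta)}{1+m},\ 2\sqrt{\frac{1-\beta}{(m+1)(1+2m)}}\right\}\quad\text{and}\quad |a_{2m+1}| \leq \frac{2(1-\beta)}{1+2m}.$$
   Context: Let $\mathbb{U}=\{z\in\mathbb{C}:|z|<1\}$ and $m\in\mathbb{N}$. $\mathcal{A}_m$ denotes the class of functions analytic in $\mathbb{U}$ of the form $f(z)=z+\sum_{k=1}^{\infty}a_{mk+1}z^{mk+1}$. $\Sigma_m$ denotes the class of $m$-fold symmetric bi-univalent functions: functions $f\in\mathcal{A}_m$ univalent in $\mathbb{U}$ whose inverse $f^{-1}$ extends to a univalent function $g$ on $\mathbb{U}$; this $g$ has the expansion $g(w)=w-a_{m+1}w^{m+1}+\left[(m+1)a_{m+1}^2-a_{2m+1}\right]w^{2m+1}-\cdots$. For $\delta\in\mathbb{N}_0$ and $h(z)=z+\sum_{k\ge1}c_{mk+1}z^{mk+1}$ analytic in $\mathbb{U}$, the $m$-fold Ruscheweyh derivative is $\mathcal{R}^\delta h(z)=z+\sum_{k=1}^{\infty}\frac{\Gamma(\delta+k+1)}{\Gamma(k+1)\Gamma(\delta+1)}c_{mk+1}z^{mk+1}$ (for $\delta=0$ it is the identity). For such $h$ and parameters $\lambda,\gamma,\tau\neq0,\delta$,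 put $$J_h(z)=1+\frac{1}{\tau}\Big[(1-\lambda)(1-\gamma)\frac{\mathcal{R}^\delta h(z)}{z}+(\lambda(\gamma+1)+\gamma)(\mathcal{R}^\delta h)'(z)+\lambda\gamma\big(z(\mathcal{R}^\delta h)''(z)-2\big)-1\Big].$$ For $0\le\beta<1$, $\Theta_{\Sigma_m}(\tau,\lambda,\gamma,\delta;\beta)$ is the set of $f\in\Sigma_m$ such that $\operatorname{Re}J_f(z)>\beta$ for all $z\in\mathbb{U}$ and $\operatorname{Re}J_g(w)>\beta$ for all $w\in\mathbb{U}$, where $g$ is the extension of $f^{-1}$ to $\mathbb{U}$. *)

theory Defs
  imports "HOL-Complex_Analysis.Complex_Analysis"
begin

definition tcoeff :: "(complex \<Rightarrow> complex) \<Rightarrow> nat \<Rightarrow> complex" where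
  "tcoeff h n = (deriv ^^ n) h 0 / of_nat (fact n)"

definition mfold_A :: "nat \<Rightarrow> (complex \<Rightarrow> complex) \<Rightarrow> bool" where
  "mfold_A m f \<longleftrightarrow> f holomorphic_on ball 0 1 \<and> tcoeff f 1 = 1 \<and>
     (\<forall>n. (\<forall>k. n \<noteq> m * k + 1) \<longrightarrow> tcoeff f n = 0)"

text \<open>g is a univalent extension to the unit disc of the inverse f^{-1}
  (g agrees with f^{-1} on a neighbourhood of 0).\<close>
definition inv_extension :: "(complex \<Rightarrow> complex) \<Rightarrow> (complex \<Rightarrow> complex) \<Rightarrow> bool" where
  "inv_extension f g \<longleftrightarrow> g holomorphic_on ball 0 1 \<and> inj_on g (ball 0 1) \<and>
     (\<exists>r>0. \<forall>w\<in>ball 0 r. g w \<in> ball 0 1 \<and> f (g w) = w)"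

definition Sigma_m :: "nat \<Rightarrow> (complex \<Rightarrow> complex) set" where
  "Sigma_m m = {f. mfold_A m f \<and> inj_on f (ball 0 1) \<and> (\<exists>g. inv_extension f g)}"

definition rusch :: "nat \<Rightarrow> nat \<Rightarrow> (complex \<Rightarrow> complex) \<Rightarrow> complex \<Rightarrow> complex" where
  "rusch m \<delta> h z = (if \<delta> = 0 then h z else
     z + (\<Sum>k. if k = 0 then 0 else
            of_nat ((\<delta> + k) choose k) * tcoeff h (m * k + 1) * z ^ (m * k + 1)))"

text \<open>The functional J_h (the quotient R h(z)/z is taken with its removable value 1 at z = 0).\<close>
definition J_fun :: "nat \<Rightarrow> complex \<Rightarrow> complex \<Rightarrow> complex \<Rightarrow> nat \<Rightarrow> (complex \<Rightarrow> complex)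
    \<Rightarrow> complex \<Rightarrow> complex" where
  "J_fun m \<tau> lam \<gamma> \<delta> h z = 1 + (1 / \<tau>) *
     ((1 - lam) * (1 - \<gamma>) * (if z = 0 then 1 else rusch m \<delta> h z / z)
      + (lam * (\<gamma> + 1) + \<gamma>) * deriv (rusch m \<delta> h) z
      + lam * \<gamma> * (z * deriv (deriv (rusch m \<delta> h)) z - 2) - 1)"

definition Theta :: "nat \<Rightarrow> complex \<Rightarrow> complex \<Rightarrow> complex \<Rightarrow> nat \<Rightarrow> real
    \<Rightarrow> (complex \<Rightarrow> complex) set" where
  "Theta m \<tau> lam \<gamma> \<delta> \<beta> = {f. f \<in> Sigma_m m \<and>
     (\<forall>z\<in>ball 0 1. Re (J_fun m \<tau> lam \<gamma> \<delta> f z) > \<beta>) \<and>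
     (\<forall>g. inv_extension f g \<longrightarrow> (\<forall>w\<in>ball 0 1. Re (J_fun m \<tau> lam \<gamma> \<delta> g w) > \<beta>))}"

end

theory Submission
  imports Defs
begin

(* For tau = lambda = 1 and gamma = delta = 0 the functional J_h is just h', so f' and
   g' = (f^-1)' both have real part > beta on the disc. Caratheodory's lemma bounds every
   Taylor coefficient of such a function by 2(1 - beta): averaging over the rotations by
   n-th roots of unity kills the coefficients of index 1, ..., n-1 without changing the
   n-th one, and Cauchy's inequality applied to the transform (p - 1)/(p + 1 - 2 beta),
   which maps the disc into the closed disc, then bounds the n-th coefficient.
   Comparing coefficients in f(g(w)) = w gives g_(2m+1) = (m+1) a_(m+1)^2 - a_(2m+1),
   so the triangle inequality yields (m+1) |a_(m+1)|^2 <= |g_(2m+1)| + |a_(2m+1)|, which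
   gives the square-root bound; the other two bounds come from f' directly. *)

lemma one_plus_power_eq_mod_square:
  fixes Y :: "'a::comm_ring_1"
  shows "\<exists>Z. (1 + Y) ^ i = 1 + of_nat i * Y + Y\<^sup>2 * Z"
proof (induction i)
  case 0
  show ?case by (intro exI[of _ 0]) simp
next
  case (Suc i)
  then obtain Z where "(1 + Y) ^ i = 1 + of_nat i * Y + Y\<^sup>2 * Z" by blast
  then show ?case
    by (intro exI[of _ "Z + of_nat i + Y * Z"]) (simp add: algebra_simps power2_eq_square)
qed

lemma fps_power_nth_gap:
  fixes G :: "'a::comm_ring_1 fps"
  assumes "m \<ge> 1" and G0: "G $ 0 = 0" and G1: "G $ 1 = 1"
    and gap: "\<And>k. 2 \<le> k \<Longrightarrow> k \<le> m \<Longrightarrow> G $ k = 0" and "j \<le> m"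
  shows "(G ^ i) $ (i + j) = (if j = 0 then 1 else if j = m then of_nat i * G $ (m + 1) else 0)"
proof -
  define Y where "Y = fps_X ^ m * fps_shift (m + 1) G"
  have G_eq: "G = fps_X * (1 + Y)"
  proof (rule fps_ext)
    fix k
    show "G $ k = (fps_X * (1 + Y)) $ k"
      using G0 G1 gap[of k] \<open>m \<ge> 1\<close>
      by (cases k) (auto simp: Y_def fps_X_power_mult_nth not_less)
  qed
  obtain W where W: "(1 + Y) ^ i = 1 + of_nat i * Y + Y\<^sup>2 * W"
    using one_plus_power_eq_mod_square by blast
  have Y2: "Y\<^sup>2 * W = fps_X ^ (2 * m) * ((fps_shift (m + 1) G)\<^sup>2 * W)"
    by (simp add: Y_def power_mult_distrib power_mult[symmetric] mult_ac)
  have "(G ^ i) $ (i + j) = ((1 + Y) ^ i) $ j"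
    by (simp add: G_eq power_mult_distrib fps_X_power_mult_nth)
  also have "\<dots> = (if j = 0 then 1 else if j = m then of_nat i * G $ (m + 1) else 0)"
    using \<open>j \<le> m\<close> \<open>m \<ge> 1\<close> unfolding W Y2
    by (auto simp: Y_def fps_X_power_mult_nth fps_of_nat[symmetric] simp del: fps_of_nat)
  finally show ?thesis .
qed

lemma fps_compose_eq_X_nth:
  fixes F G :: "'a::comm_ring_1 fps"
  assumes m: "m \<ge> 1" and F0: "F $ 0 = 0" and F1: "F $ 1 = 1"
    and F_gap: "\<And>k. 2 \<le> k \<Longrightarrow> k \<le> 2 * m \<Longrightarrow> k \<noteq> m + 1 \<Longrightarrow> F $ k = 0"
    and G0: "G $ 0 = 0" and comp: "F oo G = fps_X"
  shows "G $ 1 = 1" and "G $ (m + 1) = - F $ (m + 1)"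
    and "G $ (2 * m + 1) = of_nat (m + 1) * (F $ (m + 1))\<^sup>2 - F $ (2 * m + 1)"
proof -
  have below: "(G ^ i) $ n = 0" if "n < i" for i n
    using startsby_zero_power_prefix[OF G0] that by blast
  have F_zero: "F $ i = 0" if "i \<le> 2 * m + 1" "i \<notin> {1, m + 1, 2 * m + 1}" for i
    using that F0 F_gap[of i] by (cases "i = 0") auto
  have X_nth: "fps_X $ n =
      G $ n + F $ (m + 1) * (G ^ (m + 1)) $ n + F $ (2 * m + 1) * (G ^ (2 * m + 1)) $ n"
    if "n \<le> 2 * m + 1" for n
  proof -
    have "fps_X $ n = (\<Sum>i=0..n. F $ i * (G ^ i) $ n)"
      by (simp add: comp[symmetric] fps_compose_nth)
    also have "\<dots> = (\<Sum>i=0..2 * m + 1. F $ i * (G ^ i) $ n)"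
      using that by (intro sum.mono_neutral_left) (auto simp: below)
    also have "\<dots> = (\<Sum>i\<in>{1, m + 1, 2 * m + 1}. F $ i * (G ^ i) $ n)"
      using F_zero by (intro sum.mono_neutral_right) auto
    also have "\<dots> = G $ n + F $ (m + 1) * (G ^ (m + 1)) $ n + F $ (2 * m + 1) * (G ^ (2 * m + 1)) $ n"
      using m F1 by (simp add: algebra_simps)
    finally show ?thesis .
  qed
  show G1: "G $ 1 = 1"
    using X_nth[of 1] below[of 1 "m + 1"] below[of 1 "2 * m + 1"] m by simp
  have G_gap: "G $ k = 0" if "2 \<le> k" "k \<le> m" for k
    using X_nth[of k] below[of k "m + 1"] below[of k "2 * m + 1"] that by simp
  note power_nth = fps_power_nth_gap[OF m G0 G1 G_gap]
  show Gm: "G $ (m + 1) = - F $ (m + 1)"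
    using X_nth[of "m + 1"] power_nth[of 0 "m + 1"] below[of "m + 1" "2 * m + 1"] m
    by (simp add: eq_neg_iff_add_eq_0)
  have "(G ^ (m + 1)) $ (2 * m + 1) = of_nat (m + 1) * G $ (m + 1)"
    using power_nth[of m "m + 1"] m by (simp add: add.commute add.left_commute mult_2)
  moreover have "(G ^ (2 * m + 1)) $ (2 * m + 1) = 1"
    using power_nth[of 0 "2 * m + 1"] by simp
  ultimately have "0 = G $ (2 * m + 1) + F $ (m + 1) * (of_nat (m + 1) * G $ (m + 1)) + F $ (2 * m + 1)"
    using X_nth[of "2 * m + 1"] m by simp
  then show "G $ (2 * m + 1) = of_nat (m + 1) * (F $ (m + 1))\<^sup>2 - F $ (2 * m + 1)"
    unfolding Gm by (simp add: algebra_simps power2_eq_square eq_neg_iff_add_eq_0)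
qed

lemma sum_powers_root_of_unity:
  assumes n: "n \<ge> 1"
  defines "\<omega> \<equiv> exp (2 * of_real pi * \<i> / of_nat n)"
  shows "(\<Sum>j<n. (\<omega> ^ k) ^ j) = (if n dvd k then of_nat n else 0)"
proof -
  have \<omega>k: "\<omega> ^ k = exp (2 * of_real pi * \<i> * of_nat k / of_nat n)"
    by (simp add: \<omega>_def exp_of_nat_mult[symmetric] mult_ac)
  show ?thesis
  proof (cases "n dvd k")
    case True
    then have "\<omega> ^ k = 1"
      unfolding \<omega>k using complex_root_unity_eq_1[OF n] by blast
    then show ?thesis using True by simp
  next
    case False
    then have "\<omega> ^ k \<noteq> 1"
      unfolding \<omega>k using complex_root_unity_eq_1[OF n] by blast
    moreover have "(\<omega> ^ k) ^ n = 1"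
      unfolding \<omega>k using n by (intro complex_root_unity) auto
    ultimately show ?thesis using False by (simp add: sum_gp_strict)
  qed
qed

lemma has_fps_expansion_rotation_average:
  fixes h :: "complex \<Rightarrow> complex" and F :: "complex fps"
  assumes h: "h has_fps_expansion F" and n: "n \<ge> 1"
  defines "\<omega> \<equiv> exp (2 * of_real pi * \<i> / of_nat n)"
  shows "(\<lambda>z. (\<Sum>j<n. h (\<omega> ^ j * z)) / of_nat n)
           has_fps_expansion Abs_fps (\<lambda>k. if n dvd k then F $ k else 0)"
proof -
  have rotated: "(\<lambda>z. h (\<omega> ^ j * z)) has_fps_expansion Abs_fps (\<lambda>k. (\<omega> ^ j) ^ k * F $ k)" for j
  proof -
    have "(h \<circ> (\<lambda>z. \<omega> ^ j * z)) has_fps_expansion (F oo (fps_const (\<omega> ^ j) * fps_X))"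
      by (intro has_fps_expansion_compose h fps_expansion_intros) simp
    then show ?thesis by (simp add: fps_compose_linear o_def)
  qed
  have "(\<lambda>z. (\<Sum>j<n. h (\<omega> ^ j * z)) / of_nat n) has_fps_expansion
          (\<Sum>j<n. Abs_fps (\<lambda>k. (\<omega> ^ j) ^ k * F $ k)) * fps_const (inverse (of_nat n))"
    unfolding divide_inverse
    by (intro has_fps_expansion_cmult_right has_fps_expansion_sum rotated)
  also have "(\<Sum>j<n. Abs_fps (\<lambda>k. (\<omega> ^ j) ^ k * F $ k)) * fps_const (inverse (of_nat n))
               = Abs_fps (\<lambda>k. if n dvd k then F $ k else 0)"
  proof (rule fps_ext)
    fix k
    have "(\<Sum>j<n. (\<omega> ^ j) ^ k) = (\<Sum>j<n. (\<omega> ^ k) ^ j)"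
      by (simp add: power_mult[symmetric] mult.commute)
    then show "((\<Sum>j<n. Abs_fps (\<lambda>k. (\<omega> ^ j) ^ k * F $ k)) * fps_const (inverse (of_nat n))) $ k
                 = Abs_fps (\<lambda>k. if n dvd k then F $ k else 0) $ k"
      using sum_powers_root_of_unity[OF n, of k] n
      by (simp add: fps_sum_nth sum_distrib_right[symmetric] \<omega>_def)
  qed
  finally show ?thesis .
qed

lemma norm_fps_nth_le_bound:
  fixes f :: "complex \<Rightarrow> complex" and F :: "complex fps"
  assumes F: "f has_fps_expansion F" and hol: "f holomorphic_on ball 0 1"
    and bound: "\<And>z. z \<in> ball 0 1 \<Longrightarrow> norm (f z) \<le> M"
  shows "norm (F $ n) \<le> M"
proof -
  have radius: "norm (F $ n) * r ^ n \<le> M" if r: "0 < r" "r < 1" for r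
  proof -
    have "norm ((deriv ^^ n) f 0) \<le> fact n * M / r ^ n"
    proof (rule Cauchy_inequality)
      show "f holomorphic_on ball 0 r"
        using hol by (rule holomorphic_on_subset) (use r in auto)
      show "continuous_on (cball 0 r) f"
        using holomorphic_on_imp_continuous_on[OF hol] by (rule continuous_on_subset) (use r in auto)
    qed (use r bound in auto)
    moreover have "(deriv ^^ n) f 0 = fact n * F $ n"
      using fps_nth_fps_expansion[OF F, of n] by simp
    ultimately show ?thesis
      using r by (simp add: norm_mult field_simps)
  qed
  have "((\<lambda>r. norm (F $ n) * r ^ n) \<longlongrightarrow> norm (F $ n) * 1 ^ n) (at_left (1::real))"
    by (intro tendsto_intros)
  moreover have "eventually (\<lambda>r. norm (F $ n) * r ^ n \<le> M) (at_left (1::real))"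
    using eventually_at_left_real[of 0 "1::real"] by (rule eventually_mono) (auto intro: radius)
  ultimately show ?thesis
    using tendsto_upperbound[of _ "norm (F $ n)"] trivial_limit_at_left_real by fastforce
qed

lemma norm_diff_1_le_norm_add:
  fixes w :: complex and \<beta> :: real
  assumes "Re w > \<beta>" and "\<beta> < 1"
  shows "norm (w - 1) \<le> norm (w + of_real (1 - 2 * \<beta>))"
proof (rule power2_le_imp_le)
  have "(Re w + (1 - 2 * \<beta>))\<^sup>2 - (Re w - 1)\<^sup>2 = 4 * ((Re w - \<beta>) * (1 - \<beta>))"
    by (simp add: power2_eq_square algebra_simps)
  moreover have "(Re w - \<beta>) * (1 - \<beta>) \<ge> 0"
    using assms by simp
  ultimately show "(norm (w - 1))\<^sup>2 \<le> (norm (w + of_real (1 - 2 * \<beta>)))\<^sup>2"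
    by (simp add: cmod_power2)
qed simp

lemma fps_divide_nth_leading:
  fixes A D :: "'a::field fps"
  assumes "D $ 0 \<noteq> 0" and "\<And>i. i < n \<Longrightarrow> A $ i = 0"
  shows "(A / D) $ n = A $ n / D $ 0"
proof -
  have "(A * inverse D) $ n = (\<Sum>i=0..n. A $ i * inverse D $ (n - i))"
    by (rule fps_mult_nth)
  also have "\<dots> = A $ n * inverse D $ 0"
    using assms(2) by (subst sum.remove[of _ n]) (auto intro!: sum.neutral)
  finally show ?thesis
    using assms(1) by (simp add: fps_divide_unit divide_inverse)
qed

lemma caratheodory_gap_coefficient:
  fixes H :: "complex \<Rightarrow> complex" and P :: "complex fps" and \<beta> :: real
  assumes hol: "H holomorphic_on ball 0 1" and P: "H has_fps_expansion P"
    and P0: "P $ 0 = 1" and gap: "\<And>i. 0 < i \<Longrightarrow> i < n \<Longrightarrow> P $ i = 0"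
    and re: "\<And>z. z \<in> ball 0 1 \<Longrightarrow> Re (H z) > \<beta>" and "\<beta> < 1" and "n \<ge> 1"
  shows "norm (P $ n) \<le> 2 * (1 - \<beta>)"
proof -
  define c where "c = complex_of_real (1 - 2 * \<beta>)"
  define D where "D = P + fps_const c"
  have D0: "D $ 0 = of_real (2 * (1 - \<beta>))"
    using P0 by (simp add: D_def c_def)
  have D0_nz: "D $ 0 \<noteq> 0"
    using \<open>\<beta> < 1\<close> unfolding D0 of_real_eq_0_iff by simp
  have denom_nz: "H z + c \<noteq> 0" if "z \<in> ball 0 1" for z
  proof -
    have "Re (H z + c) > 0"
      using re[OF that] \<open>\<beta> < 1\<close> by (simp add: c_def)
    then show ?thesis by (metis zero_complex.sel(1) less_irrefl)
  qed
  define \<phi> where "\<phi> z = (H z - 1) / (H z + c)" for z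
  have "\<phi> has_fps_expansion (P - 1) / D"
    unfolding \<phi>_def D_def using D0_nz
    by (intro has_fps_expansion_divide' has_fps_expansion_diff has_fps_expansion_add P
        has_fps_expansion_const has_fps_expansion_1) (simp add: D_def)
  moreover have "\<phi> holomorphic_on ball 0 1"
    unfolding \<phi>_def using denom_nz by (intro holomorphic_intros hol) auto
  moreover have "norm (\<phi> z) \<le> 1" if "z \<in> ball 0 1" for z
    using norm_diff_1_le_norm_add[OF re[OF that] \<open>\<beta> < 1\<close>] denom_nz[OF that]
    by (simp add: \<phi>_def c_def norm_divide divide_le_eq_1)
  ultimately have "norm (((P - 1) / D) $ n) \<le> 1"
    by (rule norm_fps_nth_le_bound)
  also have "((P - 1) / D) $ n = P $ n / D $ 0"
    using P0 gap \<open>n \<ge> 1\<close> by (subst fps_divide_nth_leading[OF D0_nz]) (auto simp: less_Suc_eq_0_disj)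
  finally have "norm (P $ n) / norm (D $ 0) \<le> 1"
    by (simp add: norm_divide)
  moreover have "norm (D $ 0) = 2 * (1 - \<beta>)"
    using \<open>\<beta> < 1\<close> unfolding D0 norm_of_real by simp
  ultimately show ?thesis
    using \<open>\<beta> < 1\<close> by (simp add: pos_divide_le_eq)
qed

lemma caratheodory_coefficient_bound:
  fixes h :: "complex \<Rightarrow> complex" and \<beta> :: real
  assumes hol: "h holomorphic_on ball 0 1" and h0: "h 0 = 1"
    and re: "\<And>z. z \<in> ball 0 1 \<Longrightarrow> Re (h z) > \<beta>" and "\<beta> < 1" and n: "n \<ge> 1"
  shows "norm (fps_expansion h 0 $ n) \<le> 2 * (1 - \<beta>)"
proof -
  define \<omega> where "\<omega> = exp (2 * of_real pi * \<i> / of_nat n)"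
  define H where "H z = (\<Sum>j<n. h (\<omega> ^ j * z)) / of_nat n" for z
  define P where "P = fps_expansion h 0"
  have rotate: "\<omega> ^ j * z \<in> ball 0 1" if "z \<in> ball 0 1" for j z
    using that by (simp add: \<omega>_def norm_mult norm_power norm_exp_eq_Re)
  have hP: "h has_fps_expansion P"
    unfolding P_def by (rule has_fps_expansion_fps_expansion[OF _ _ hol]) auto
  have HP: "H has_fps_expansion Abs_fps (\<lambda>k. if n dvd k then P $ k else 0)"
    unfolding H_def \<omega>_def by (rule has_fps_expansion_rotation_average[OF hP n])
  have "H holomorphic_on ball 0 1"
    unfolding H_def
    by (intro holomorphic_intros holomorphic_on_compose_gen[OF _ hol, unfolded o_def])
       (use n rotate in \<open>auto simp: dist_0_norm\<close>)
  moreover have "Re (H z) > \<beta>" if "z \<in> ball 0 1" for z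
  proof -
    have "(\<Sum>j<n. \<beta>) < (\<Sum>j<n. Re (h (\<omega> ^ j * z)))"
      using n re rotate[OF that] by (intro sum_strict_mono) (auto simp: lessThan_empty_iff)
    then show ?thesis
      using n by (simp add: H_def Re_sum Re_divide_of_nat field_simps)
  qed
  moreover have "P $ 0 = 1"
    using fps_nth_fps_expansion[OF hP, of 0] h0 by simp
  ultimately have "norm (Abs_fps (\<lambda>k. if n dvd k then P $ k else 0) $ n) \<le> 2 * (1 - \<beta>)"
    using n \<open>\<beta> < 1\<close> by (intro caratheodory_gap_coefficient[OF _ HP]) (auto dest: dvd_imp_le)
  then show ?thesis by (simp add: P_def)
qed

lemma tcoeff_eq_fps_expansion: "tcoeff h n = fps_expansion h 0 $ n"
  by (simp add: tcoeff_def fps_expansion_def)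

lemma tcoeff_deriv: "tcoeff (deriv h) n = of_nat (Suc n) * tcoeff h (Suc n)"
proof -
  define X where "X = (deriv ^^ n) (deriv h) 0"
  have "tcoeff h (Suc n) = X / (of_nat (Suc n) * fact n)"
    unfolding tcoeff_def X_def
    by (simp only: funpow_Suc_right o_def fact_Suc of_nat_mult of_nat_fact of_nat_id)
  moreover have "tcoeff (deriv h) n = X / fact n"
    unfolding tcoeff_def X_def by (simp only: of_nat_fact)
  ultimately show ?thesis
    by (simp del: of_nat_Suc)
qed

lemma J_fun_1_1_0_0: "J_fun m 1 1 0 0 h z = deriv h z"
proof -
  have "rusch m 0 h = h" by (rule ext) (simp add: rusch_def)
  then show ?thesis by (simp add: J_fun_def)
qed

lemma caratheodory_tcoeff_of_deriv:
  fixes h :: "complex \<Rightarrow> complex" and \<beta> :: real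
  assumes hol: "h holomorphic_on ball 0 1" and h1: "tcoeff h 1 = 1"
    and re: "\<And>z. z \<in> ball 0 1 \<Longrightarrow> Re (deriv h z) > \<beta>" and "\<beta> < 1" and "n \<ge> 1"
  shows "(real n + 1) * norm (tcoeff h (n + 1)) \<le> 2 * (1 - \<beta>)"
proof -
  have "deriv h holomorphic_on ball 0 1"
    using hol by (rule holomorphic_deriv) simp
  moreover have "deriv h 0 = 1"
    using h1 by (simp add: tcoeff_def)
  ultimately have "norm (tcoeff (deriv h) n) \<le> 2 * (1 - \<beta>)"
    unfolding tcoeff_eq_fps_expansion
    using re \<open>\<beta> < 1\<close> \<open>n \<ge> 1\<close> by (rule caratheodory_coefficient_bound)
  moreover have "norm (of_nat (Suc n) :: complex) = real n + 1"
    by (simp only: norm_of_nat)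
  ultimately show ?thesis
    by (simp add: tcoeff_deriv norm_mult)
qed

lemma inv_extension_fps_compose:
  assumes f_hol: "f holomorphic_on ball 0 1" and f0: "f 0 = 0" and f_inj: "inj_on f (ball 0 1)"
    and "inv_extension f g"
  shows "g 0 = 0" and "fps_expansion f 0 oo fps_expansion g 0 = fps_X"
proof -
  obtain r where "r > 0" and r: "\<And>w. w \<in> ball 0 r \<Longrightarrow> g w \<in> ball 0 1 \<and> f (g w) = w"
    using \<open>inv_extension f g\<close> unfolding inv_extension_def by blast
  have g_hol: "g holomorphic_on ball 0 1"
    using \<open>inv_extension f g\<close> unfolding inv_extension_def by blast
  have "g 0 \<in> ball 0 1" and "f (g 0) = f 0"
    using r[of 0] \<open>r > 0\<close> f0 by auto
  then show g0: "g 0 = 0"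
    using inj_onD[OF f_inj] by auto
  have F: "f has_fps_expansion fps_expansion f 0"
    by (rule has_fps_expansion_fps_expansion[OF _ _ f_hol]) auto
  have G: "g has_fps_expansion fps_expansion g 0"
    by (rule has_fps_expansion_fps_expansion[OF _ _ g_hol]) auto
  have "fps_expansion g 0 $ 0 = 0"
    using fps_nth_fps_expansion[OF G, of 0] g0 by simp
  then have comp: "(f \<circ> g) has_fps_expansion (fps_expansion f 0 oo fps_expansion g 0)"
    by (rule has_fps_expansion_compose[OF F G])
  have "eventually (\<lambda>w. w \<in> ball 0 r) (nhds 0)"
    using \<open>r > 0\<close> by (intro eventually_nhds_in_open) auto
  then have near_0: "eventually (\<lambda>w. (f \<circ> g) w = w) (nhds 0)"
    by (rule eventually_mono) (simp add: r)
  have "(\<lambda>w. w) has_fps_expansion (fps_expansion f 0 oo fps_expansion g 0)"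
    using has_fps_expansion_cong[OF near_0 refl] comp by (simp add: o_def)
  then show "fps_expansion f 0 oo fps_expansion g 0 = fps_X"
    by (rule fps_expansion_unique_complex[OF _ has_fps_expansion_fps_X])
qed

lemma Sigma_m_inverse_tcoeff:
  assumes "m \<ge> 1" and "f \<in> Sigma_m m" and "inv_extension f g"
  shows "tcoeff g 1 = 1"
    and "tcoeff g (2 * m + 1) = of_nat (m + 1) * (tcoeff f (m + 1))\<^sup>2 - tcoeff f (2 * m + 1)"
proof -
  have f_hol: "f holomorphic_on ball 0 1" and f1: "tcoeff f 1 = 1" and f_inj: "inj_on f (ball 0 1)"
    and f_sym: "\<And>n. (\<forall>k. n \<noteq> m * k + 1) \<Longrightarrow> tcoeff f n = 0"
    using \<open>f \<in> Sigma_m m\<close> unfolding Sigma_m_def mfold_A_def by auto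
  have f0: "tcoeff f 0 = 0"
    by (rule f_sym) auto
  have f_gap: "tcoeff f k = 0" if "2 \<le> k" "k \<le> 2 * m" "k \<noteq> m + 1" for k
  proof (rule f_sym, intro allI notI)
    fix j assume "k = m * j + 1"
    with that \<open>m \<ge> 1\<close> show False
      by (cases j; cases "j - 1") (auto simp: algebra_simps)
  qed
  have "f 0 = 0"
    using f0 by (simp add: tcoeff_def)
  note inverse = inv_extension_fps_compose[OF f_hol this f_inj \<open>inv_extension f g\<close>]
  have g0: "tcoeff g 0 = 0"
    using inverse(1) by (simp add: tcoeff_def)
  note coeffs = f0 f1 f_gap g0
  note inverse_nth =
    fps_compose_eq_X_nth[OF \<open>m \<ge> 1\<close> coeffs[unfolded tcoeff_eq_fps_expansion] inverse(2)]
  show "tcoeff g 1 = 1"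
    and "tcoeff g (2 * m + 1) = of_nat (m + 1) * (tcoeff f (m + 1))\<^sup>2 - tcoeff f (2 * m + 1)"
    using inverse_nth(1,3) unfolding tcoeff_eq_fps_expansion by auto
qed

lemma norm_le_of_inverse_coefficient_bounds:
  fixes a b :: complex and \<beta> :: real
  assumes b: "(2 * real m + 1) * norm b \<le> 2 * (1 - \<beta>)"
    and inv: "(2 * real m + 1) * norm (of_nat (m + 1) * a\<^sup>2 - b) \<le> 2 * (1 - \<beta>)"
  shows "norm a \<le> 2 * sqrt ((1 - \<beta>) / ((real m + 1) * (1 + 2 * real m)))"
proof -
  have "(real m + 1) * (norm a)\<^sup>2 = norm (of_nat (m + 1) * a\<^sup>2)"
    by (simp add: norm_mult norm_power del: of_nat_Suc)
  also have "\<dots> \<le> norm b + norm (of_nat (m + 1) * a\<^sup>2 - b)"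
    by (rule norm_triangle_sub)
  finally have "(2 * real m + 1) * ((real m + 1) * (norm a)\<^sup>2)
      \<le> (2 * real m + 1) * (norm b + norm (of_nat (m + 1) * a\<^sup>2 - b))"
    by (rule mult_left_mono) simp
  also have "\<dots> \<le> 4 * (1 - \<beta>)"
    using b inv by (simp add: distrib_left)
  finally have "(2 * real m + 1) * ((real m + 1) * (norm a)\<^sup>2) \<le> 4 * (1 - \<beta>)" .
  then have "(norm a)\<^sup>2 * ((real m + 1) * (1 + 2 * real m)) \<le> 4 * (1 - \<beta>)"
    by (simp add: algebra_simps)
  then have "(norm a)\<^sup>2 \<le> 4 * (1 - \<beta>) / ((real m + 1) * (1 + 2 * real m))"
    by (subst pos_le_divide_eq) (auto intro: mult_pos_pos)
  then have "norm a \<le> sqrt (4 * ((1 - \<beta>) / ((real m + 1) * (1 + 2 * real m))))"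
    by (intro real_le_rsqrt) simp
  also have "\<dots> = 2 * sqrt ((1 - \<beta>) / ((real m + 1) * (1 + 2 * real m)))"
    by (simp only: real_sqrt_mult) simp
  finally show ?thesis .
qed

theorem corollary4:
  fixes m :: nat and \<beta> :: real and f :: "complex \<Rightarrow> complex"
  assumes "m \<ge> 1" and "0 \<le> \<beta>" and "\<beta> < 1"
    and "f \<in> Theta m 1 1 0 0 \<beta>"
  shows "norm (tcoeff f (m + 1)) \<le>
           min (2 * (1 - \<beta>) / (1 + real m))
               (2 * sqrt ((1 - \<beta>) / ((real m + 1) * (1 + 2 * real m))))
       \<and> norm (tcoeff f (2 * m + 1)) \<le> 2 * (1 - \<beta>) / (1 + 2 * real m)"
proof -
  have f: "f \<in> Sigma_m m" and re_f: "\<And>z. z \<in> ball 0 1 \<Longrightarrow> Re (deriv f z) > \<beta>"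
    and re_g: "\<And>g w. inv_extension f g \<Longrightarrow> w \<in> ball 0 1 \<Longrightarrow> Re (deriv g w) > \<beta>"
    using assms(4) unfolding Theta_def J_fun_1_1_0_0 by auto
  then obtain g where g: "inv_extension f g"
    unfolding Sigma_m_def by blast
  have f_hol: "f holomorphic_on ball 0 1" and f1: "tcoeff f 1 = 1"
    using f unfolding Sigma_m_def mfold_A_def by auto
  have g_hol: "g holomorphic_on ball 0 1"
    using g unfolding inv_extension_def by blast
  have bound_f: "(real n + 1) * norm (tcoeff f (n + 1)) \<le> 2 * (1 - \<beta>)" if "n \<ge> 1" for n
    by (rule caratheodory_tcoeff_of_deriv[OF f_hol f1]) (use re_f \<open>\<beta> < 1\<close> that in auto)
  have "(real (2 * m) + 1) * norm (tcoeff g (2 * m + 1)) \<le> 2 * (1 - \<beta>)"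
    by (rule caratheodory_tcoeff_of_deriv[OF g_hol Sigma_m_inverse_tcoeff(1)[OF \<open>m \<ge> 1\<close> f g]])
       (use re_g[OF g] \<open>\<beta> < 1\<close> \<open>m \<ge> 1\<close> in auto)
  then have "(2 * real m + 1) * norm (of_nat (m + 1) * (tcoeff f (m + 1))\<^sup>2 - tcoeff f (2 * m + 1))
          \<le> 2 * (1 - \<beta>)"
    unfolding Sigma_m_inverse_tcoeff(2)[OF \<open>m \<ge> 1\<close> f g] by simp
  moreover have "(real m + 1) * norm (tcoeff f (m + 1)) \<le> 2 * (1 - \<beta>)"
    using bound_f \<open>m \<ge> 1\<close> by blast
  moreover have b: "(2 * real m + 1) * norm (tcoeff f (2 * m + 1)) \<le> 2 * (1 - \<beta>)"
    using bound_f[of "2 * m"] \<open>m \<ge> 1\<close> by simp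
  ultimately show ?thesis
    using norm_le_of_inverse_coefficient_bounds[OF b]
    by (simp add: pos_le_divide_eq add.commute mult.commute)
qed

end
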